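(* Let $L=L(m,n;k,l)$ be an $L$-shaped supergrid graph. Then $L$ contains a Hamiltonian cycle if and only if $L$ has no vertex of degree $1$.
   Context: The infinite supergrid graph has as vertices all points $(x,y)\in\mathbb{Z}^2$, two distinct vertices $u=(u_x,u_y)$, $v=(v_x,v_y)$ being adjacent iff $|u_x-v_x|\le 1$ and $|u_y-v_y|\le 1$. A supergrid graph is a finite vertex-induced subgraph of it. For integers $m,n>1$ and $k,l\ge 1$ with $m-k\ge 1$ and $n-l\ge 1$, the $L$-shaped supergrid graph $L(m,n;k,l)$ is the supergrid graph induced by the vertex set $\{(x,y):1\le x\le m,\ 1\le y\le n\}\setminus\{(x,y): m-k+1\le x\le m,\ 1\le y\le l\}$ (i.e. the rectangle $R(m,n)$ with an $k\times l$ block removed from its upper-right corner, where $(1,1)$ is the upper-left corner and $y$ increases downward). A cycle is a closed simple path on at least $3$ distinct vertices. *)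

theory Defs
  imports Main
begin

type_synonym vertex = "int \<times> int"

definition sg_adj :: "vertex \<Rightarrow> vertex \<Rightarrow> bool" where
  "sg_adj u v \<longleftrightarrow> u \<noteq> v \<and> \<bar>fst u - fst v\<bar> \<le> 1 \<and> \<bar>snd u - snd v\<bar> \<le> 1"

definition Lshape :: "int \<Rightarrow> int \<Rightarrow> int \<Rightarrow> int \<Rightarrow> vertex set" where
  "Lshape m n k l =
     {(x, y). 1 \<le> x \<and> x \<le> m \<and> 1 \<le> y \<and> y \<le> n}
     - {(x, y). m - k + 1 \<le> x \<and> x \<le> m \<and> 1 \<le> y \<and> y \<le> l}"

definition sg_degree :: "vertex set \<Rightarrow> vertex \<Rightarrow> nat" where
  "sg_degree V v = card {u \<in> V. sg_adj u v}"

definition sg_hamiltonian_cycle :: "vertex set \<Rightarrow> vertex list \<Rightarrow> bool" where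
  "sg_hamiltonian_cycle V c \<longleftrightarrow>
     distinct c \<and> set c = V \<and> 3 \<le> length c \<and>
     (\<forall>i. Suc i < length c \<longrightarrow> sg_adj (c ! i) (c ! Suc i)) \<and>
     sg_adj (last c) (hd c)"

end

(*
  A Hamiltonian cycle enters and leaves every vertex through two distinct neighbours, so no
  vertex has degree 1.  Conversely, if the vertical arm has width 1 and l >= 2 then the corner
  (1,1) has degree 1, and symmetrically for the corner (m,n).  Otherwise the L-shape is cut into
  three rectangles, each traversed by a Hamiltonian path between two of its corners, and the
  three paths close up into a cycle.  Corner-to-corner paths exist in every supergrid rectangle:
  the diagonal edges remove the parity obstruction known from ordinary grid graphs.
*)
theory Submission
  imports Defs
begin

lemma sg_adj_sym: "sg_adj u v \<longleftrightarrow> sg_adj v u"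
  unfolding sg_adj_def by auto

lemma sg_hamiltonian_cycle_iff:
  "sg_hamiltonian_cycle V c \<longleftrightarrow>
     distinct c \<and> set c = V \<and> 3 \<le> length c \<and> successively sg_adj c \<and> sg_adj (last c) (hd c)"
  unfolding sg_hamiltonian_cycle_def successively_conv_nth by blast

lemma sg_hamiltonian_cycle_rotate1:
  assumes "sg_hamiltonian_cycle V c"
  shows "sg_hamiltonian_cycle V (rotate1 c)"
proof -
  have "3 \<le> length c"
    using assms unfolding sg_hamiltonian_cycle_def by blast
  then obtain x xs where "c = x # xs" "xs \<noteq> []"
    by (cases c) fastforce+
  then show ?thesis
    using assms by (auto simp: sg_hamiltonian_cycle_iff successively_append_iff successively_Cons)
qed

lemma sg_hamiltonian_cycle_rotate:
  "sg_hamiltonian_cycle V c \<Longrightarrow> sg_hamiltonian_cycle V (rotate n c)"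
  by (induction n) (simp_all add: sg_hamiltonian_cycle_rotate1)

lemma sg_degree_ge_2_if_hamiltonian_cycle:
  assumes c: "sg_hamiltonian_cycle V c" and v: "v \<in> V"
  shows "2 \<le> sg_degree V v"
proof -
  obtain i where i: "i < length c" "c ! i = v"
    using c v unfolding sg_hamiltonian_cycle_def by (metis in_set_conv_nth)
  define d where "d = rotate i c"
  have d: "sg_hamiltonian_cycle V d"
    unfolding d_def using c by (rule sg_hamiltonian_cycle_rotate)
  have "hd d = v"
    using i hd_rotate_conv_nth[of c i] unfolding d_def by fastforce
  have len: "3 \<le> length d" and dist: "distinct d" and set_d: "set d = V"
    using d unfolding sg_hamiltonian_cycle_def by auto
  then have "d \<noteq> []"
    by auto
  have "sg_adj (d ! 0) (d ! 1)"
    using d len successively_nth[of sg_adj d 0] by (simp add: sg_hamiltonian_cycle_iff)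
  moreover have "d ! 0 = v"
    using \<open>d \<noteq> []\<close> \<open>hd d = v\<close> by (simp add: hd_conv_nth)
  ultimately have "sg_adj (d ! 1) v"
    by (simp add: sg_adj_sym)
  moreover have "sg_adj (last d) v"
    using d \<open>hd d = v\<close> unfolding sg_hamiltonian_cycle_def by blast
  moreover have "d ! 1 \<noteq> last d"
    using len dist \<open>d \<noteq> []\<close> by (simp add: last_conv_nth nth_eq_iff_index_eq)
  moreover have "{d ! 1, last d} \<subseteq> V"
    using len set_d \<open>d \<noteq> []\<close> by auto
  ultimately have "{d ! 1, last d} \<subseteq> {u \<in> V. sg_adj u v}" and "card {d ! 1, last d} = 2"
    by auto
  moreover have "finite {u \<in> V. sg_adj u v}"
    using set_d by auto
  ultimately show ?thesis
    unfolding sg_degree_def using card_mono by metis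
qed

definition sg_ham_path :: "vertex set \<Rightarrow> vertex \<Rightarrow> vertex \<Rightarrow> bool" where
  "sg_ham_path S p q \<longleftrightarrow>
     (\<exists>xs. xs \<noteq> [] \<and> distinct xs \<and> set xs = S \<and> successively sg_adj xs \<and> hd xs = p \<and> last xs = q)"

lemma sg_ham_path_singleton: "sg_ham_path {p} p p"
  unfolding sg_ham_path_def by (rule exI[of _ "[p]"]) auto

lemma sg_ham_path_append:
  assumes "sg_ham_path S p q" and "sg_ham_path T r s" and "sg_adj q r"
    and "S \<inter> T = {}" and "S \<union> T = V"
  shows "sg_ham_path V p s"
proof -
  obtain xs ys where
    "xs \<noteq> []" "distinct xs" "set xs = S" "successively sg_adj xs" "hd xs = p" "last xs = q"
    "ys \<noteq> []" "distinct ys" "set ys = T" "successively sg_adj ys" "hd ys = r" "last ys = s"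
    using assms(1,2) unfolding sg_ham_path_def by blast
  then show ?thesis
    using assms(3-) unfolding sg_ham_path_def
    by (intro exI[of _ "xs @ ys"]) (auto simp: successively_append_iff)
qed

lemma sg_ham_path_rev:
  assumes "sg_ham_path S p q"
  shows "sg_ham_path S q p"
proof -
  obtain xs where
    "xs \<noteq> []" "distinct xs" "set xs = S" "successively sg_adj xs" "hd xs = p" "last xs = q"
    using assms unfolding sg_ham_path_def by blast
  then show ?thesis
    unfolding sg_ham_path_def
    by (intro exI[of _ "rev xs"]) (simp add: hd_rev last_rev sg_adj_sym)
qed

lemma sg_hamiltonian_cycle_if_ham_path:
  assumes "sg_ham_path V p q" and "sg_adj q p" and "3 \<le> card V"
  shows "\<exists>c. sg_hamiltonian_cycle V c"
proof -
  obtain xs where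
    "xs \<noteq> []" "distinct xs" "set xs = V" "successively sg_adj xs" "hd xs = p" "last xs = q"
    using assms(1) unfolding sg_ham_path_def by blast
  moreover from this have "length xs = card V"
    by (metis distinct_card)
  ultimately have "sg_hamiltonian_cycle V xs"
    using assms(2,3) by (simp add: sg_hamiltonian_cycle_iff)
  then show ?thesis ..
qed

definition rect :: "int \<Rightarrow> int \<Rightarrow> int \<Rightarrow> int \<Rightarrow> vertex set" where
  "rect x1 x2 y1 y2 = {(x, y). x1 \<le> x \<and> x \<le> x2 \<and> y1 \<le> y \<and> y \<le> y2}"

lemma sg_ham_path_short_row:
  assumes "x1 \<le> x2" and "x2 \<le> x1 + 1"
  shows "sg_ham_path (rect x1 x2 y y) (x1, y) (x2, y)"
proof (cases "x1 = x2")
  case True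
  then have "rect x1 x2 y y = {(x1, y)}"
    by (auto simp: rect_def)
  then show ?thesis
    using True sg_ham_path_singleton by simp
next
  case False
  then show ?thesis
    using assms by (intro sg_ham_path_append[OF sg_ham_path_singleton sg_ham_path_singleton])
      (auto simp: rect_def sg_adj_def)
qed

lemma sg_ham_path_narrow_rect:
  assumes "x1 \<le> x2" and "x2 \<le> x1 + 1" and "y1 \<le> y2"
  shows "sg_ham_path (rect x1 x2 y1 y2) (x1, y1) (x2, y2)"
  using \<open>y1 \<le> y2\<close>
proof (induction y2 rule: int_ge_induct)
  case base
  show ?case
    using assms(1,2) by (rule sg_ham_path_short_row)
next
  case (step y)
  then show ?case
    using assms by (intro sg_ham_path_append[OF step.IH sg_ham_path_short_row])
      (auto simp: rect_def sg_adj_def)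
qed

text \<open>Columns are snaked through two at a time; a strip of width at most two is traversed row by
  row, passing from one row to the next along a diagonal edge.\<close>
lemma sg_ham_path_rect_diagonal:
  assumes "x1 \<le> x2" and "y1 \<le> y2"
  shows "sg_ham_path (rect x1 x2 y1 y2) (x1, y1) (x2, y2)"
  using assms(1)
proof (induction "nat (x2 - x1)" arbitrary: x1 rule: less_induct)
  case less
  show ?case
  proof (cases "x2 \<le> x1 + 1")
    case True
    then show ?thesis
      using less.prems assms(2) by (intro sg_ham_path_narrow_rect)
  next
    case False
    have down: "sg_ham_path (rect x1 x1 y1 y2) (x1, y1) (x1, y2)"
      using assms(2) by (intro sg_ham_path_narrow_rect) auto
    have up: "sg_ham_path (rect (x1 + 1) (x1 + 1) y1 y2) (x1 + 1, y2) (x1 + 1, y1)"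
      using assms(2) by (intro sg_ham_path_rev[OF sg_ham_path_narrow_rect]) auto
    have rest: "sg_ham_path (rect (x1 + 2) x2 y1 y2) (x1 + 2, y1) (x2, y2)"
      using False by (intro less.hyps) auto
    have right: "sg_ham_path (rect (x1 + 1) x2 y1 y2) (x1 + 1, y2) (x2, y2)"
      using False by (intro sg_ham_path_append[OF up rest]) (auto simp: rect_def sg_adj_def)
    show ?thesis
      using False assms(2)
      by (intro sg_ham_path_append[OF down right]) (auto simp: rect_def sg_adj_def)
  qed
qed

lemma sg_ham_path_rect_left_side:
  assumes "x1 \<le> x2" and "y1 \<le> y2" and "y1 < y2 \<or> x1 = x2"
  shows "sg_ham_path (rect x1 x2 y1 y2) (x1, y1) (x1, y2)"
proof (cases "x1 = x2")
  case True
  then show ?thesis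
    using assms sg_ham_path_rect_diagonal[of x1 x2 y1 y2] by simp
next
  case False
  have upper: "sg_ham_path (rect x1 x2 y1 (y2 - 1)) (x1, y1) (x2, y2 - 1)"
    using assms False by (intro sg_ham_path_rect_diagonal) auto
  have last_row: "sg_ham_path (rect x1 x2 y2 y2) (x2, y2) (x1, y2)"
    using assms by (intro sg_ham_path_rev[OF sg_ham_path_rect_diagonal]) auto
  show ?thesis
    using assms False
    by (intro sg_ham_path_append[OF upper last_row]) (auto simp: rect_def sg_adj_def)
qed

lemma sg_ham_path_rect_bottom_side:
  assumes "x1 \<le> x2" and "y1 \<le> y2" and "x1 < x2 \<or> y1 = y2"
  shows "sg_ham_path (rect x1 x2 y1 y2) (x1, y2) (x2, y2)"
proof (cases "y1 = y2")
  case True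
  then show ?thesis
    using assms sg_ham_path_rect_diagonal[of x1 x2 y1 y2] by simp
next
  case False
  have first_column: "sg_ham_path (rect x1 x1 y1 y2) (x1, y2) (x1, y1)"
    using assms by (intro sg_ham_path_rev[OF sg_ham_path_rect_diagonal]) auto
  have rest: "sg_ham_path (rect (x1 + 1) x2 y1 y2) (x1 + 1, y1) (x2, y2)"
    using assms False by (intro sg_ham_path_rect_diagonal) auto
  show ?thesis
    using assms False
    by (intro sg_ham_path_append[OF first_column rest]) (auto simp: rect_def sg_adj_def)
qed

lemma finite_Lshape: "finite (Lshape m n k l)"
proof (rule finite_subset)
  show "Lshape m n k l \<subseteq> {1..m} \<times> {1..n}"
    by (auto simp: Lshape_def)
qed simp

text \<open>The two disjunctive hypotheses are exactly what the corner paths through the upper part of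
  the vertical arm and through the foot below the removed block require.\<close>
lemma Lshape_hamiltonian_cycle:
  assumes "1 \<le> k" and "1 \<le> l" and "1 \<le> m - k" and "1 \<le> n - l"
    and "l = 1 \<or> 2 \<le> m - k" and "k = 1 \<or> 2 \<le> n - l"
  shows "\<exists>c. sg_hamiltonian_cycle (Lshape m n k l) c"
proof -
  have arm_lower: "sg_ham_path (rect 1 (m - k) (l + 1) n) (m - k, n) (1, l + 1)"
    using assms by (intro sg_ham_path_rev[OF sg_ham_path_rect_diagonal]) auto
  have arm_upper: "sg_ham_path (rect 1 (m - k) 1 l) (1, l) (m - k, l)"
    using assms by (intro sg_ham_path_rect_bottom_side) auto
  have foot: "sg_ham_path (rect (m - k + 1) m (l + 1) n) (m - k + 1, l + 1) (m - k + 1, n)"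
    using assms by (intro sg_ham_path_rect_left_side) auto
  have arm: "sg_ham_path (rect 1 (m - k) 1 n) (m - k, n) (m - k, l)"
    using assms by (intro sg_ham_path_append[OF arm_lower arm_upper]) (auto simp: rect_def sg_adj_def)
  have path: "sg_ham_path (Lshape m n k l) (m - k, n) (m - k + 1, n)"
    using assms
    by (intro sg_ham_path_append[OF arm foot]) (auto simp: rect_def Lshape_def sg_adj_def)
  have "{(1, n), (2::int, n), (1, n - 1)} \<subseteq> Lshape m n k l"
    using assms by (auto simp: Lshape_def)
  then have "card {(1, n), (2::int, n), (1, n - 1)} \<le> card (Lshape m n k l)"
    by (intro card_mono finite_Lshape)
  then have "3 \<le> card (Lshape m n k l)"
    by simp
  moreover have "sg_adj (m - k + 1, n) (m - k, n)"
    by (simp add: sg_adj_def)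
  ultimately show ?thesis
    using path by (intro sg_hamiltonian_cycle_if_ham_path)
qed

lemma Lshape_pendant_upper_left_corner:
  assumes "1 \<le> k" and "m - k = 1" and "2 \<le> l" and "l < n"
  shows "(1, 1) \<in> Lshape m n k l" and "sg_degree (Lshape m n k l) (1, 1) = 1"
proof -
  show "(1, 1) \<in> Lshape m n k l"
    using assms by (auto simp: Lshape_def)
  have "{u \<in> Lshape m n k l. sg_adj u (1, 1)} = {(1, 2)}"
    using assms by (auto simp: Lshape_def sg_adj_def abs_le_iff)
  then show "sg_degree (Lshape m n k l) (1, 1) = 1"
    by (simp add: sg_degree_def)
qed

lemma Lshape_pendant_lower_right_corner:
  assumes "1 \<le> l" and "n - l = 1" and "2 \<le> k" and "k < m"
  shows "(m, n) \<in> Lshape m n k l" and "sg_degree (Lshape m n k l) (m, n) = 1"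
proof -
  show "(m, n) \<in> Lshape m n k l"
    using assms by (auto simp: Lshape_def)
  have "{u \<in> Lshape m n k l. sg_adj u (m, n)} = {(m - 1, n)}"
    using assms by (auto simp: Lshape_def sg_adj_def abs_le_iff)
  then show "sg_degree (Lshape m n k l) (m, n) = 1"
    by (simp add: sg_degree_def)
qed

theorem theorem2:
  fixes m n k l :: int
  assumes "m > 1" and "n > 1" and "k \<ge> 1" and "l \<ge> 1"
    and "m - k \<ge> 1" and "n - l \<ge> 1"
  shows "(\<exists>c. sg_hamiltonian_cycle (Lshape m n k l) c) \<longleftrightarrow>
         (\<forall>v \<in> Lshape m n k l. sg_degree (Lshape m n k l) v \<noteq> 1)"
proof
  assume "\<exists>c. sg_hamiltonian_cycle (Lshape m n k l) c"
  then show "\<forall>v \<in> Lshape m n k l. sg_degree (Lshape m n k l) v \<noteq> 1"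
    using sg_degree_ge_2_if_hamiltonian_cycle by fastforce
next
  assume no_pendant: "\<forall>v \<in> Lshape m n k l. sg_degree (Lshape m n k l) v \<noteq> 1"
  have "l = 1 \<or> 2 \<le> m - k"
    using no_pendant Lshape_pendant_upper_left_corner[of k m l n] assms by force
  moreover have "k = 1 \<or> 2 \<le> n - l"
    using no_pendant Lshape_pendant_lower_right_corner[of l n k m] assms by force
  ultimately show "\<exists>c. sg_hamiltonian_cycle (Lshape m n k l) c"
    using assms by (intro Lshape_hamiltonian_cycle)
qed

end
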